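(* Let $n$ be a positive integer and let $P$ and $Q$ be $3$-good partitions of $[n]$ whose collections of $3$-element parts coincide. Then $P=Q$. In other words, a $3$-good partition of $[n]$ is uniquely determined by $n$ together with the set of its parts of size exactly $3$.
   Context: A partition of $[n]=\{1,\dots,n\}$ into nonempty parts is called $3$-good if every part has at most $3$ elements and the sum of the elements of every part is a power of $3$, i.e. equals $3^s$ for some integer $s\ge 0$. *)

theory Defs
  imports Main "HOL-Library.Disjoint_Sets"
begin

definition three_good :: "nat \<Rightarrow> nat set set \<Rightarrow> bool" where
  "three_good n P \<longleftrightarrow> partition_on {1..n} P \<and>
     (\<forall>B\<in>P. card B \<le> 3 \<and> (\<exists>s::nat. \<Sum>B = 3 ^ s))"

end

theory Submission
  imports Defs
begin

text \<open>If two 3-good partitions differed, take the largest number m whose blocks B (in P) and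
  C (in Q) differ. Neither block has three elements, since the 3-element blocks are shared;
  and all elements of B and C are at most m, because above m the partitions agree. So B and C
  are m alone or m together with one smaller number; their sums lie in [m, 2m), which contains
  at most one power of 3, and a block of this shape is determined by m and its sum.\<close>

lemma partition_on_blocks_eq:
  assumes "partition_on A P" "X \<in> P" "Y \<in> P" "x \<in> X" "x \<in> Y"
  shows "X = Y"
  using disjointD[OF partition_onD2[OF assms(1)] assms(2,3)] assms(4,5) by blast

lemma partition_on_eq_if_blocks_agree:
  assumes P: "partition_on A P" and Q: "partition_on A Q"
    and agree: "\<forall>X\<in>P. \<forall>Y\<in>Q. X \<inter> Y \<noteq> {} \<longrightarrow> X = Y"
  shows "P = Q"
proof -
  have "X \<in> R'" if R: "partition_on A R" and R': "partition_on A R'" and "X \<in> R"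
    and agree': "\<forall>X\<in>R. \<forall>Y\<in>R'. X \<inter> Y \<noteq> {} \<longrightarrow> X = Y" for R R' X
  proof -
    obtain x where "x \<in> X" using partition_onD3[OF R] \<open>X \<in> R\<close> by (metis all_not_in_conv)
    moreover have "x \<in> A" using partition_onD1[OF R] \<open>X \<in> R\<close> \<open>x \<in> X\<close> by blast
    then obtain Y where "Y \<in> R'" "x \<in> Y" using partition_onD1[OF R'] by blast
    ultimately show ?thesis using agree' \<open>X \<in> R\<close> by blast
  qed
  from this[OF P Q _ agree] this[OF Q P] agree show ?thesis by blast
qed

lemma partition_on_block_le_if_agree_above:
  fixes m :: "'a::linorder"
  assumes P: "partition_on A P" and Q: "partition_on A Q"
    and "X \<in> P" "Y \<in> Q" "m \<in> X" "m \<in> Y" "X \<noteq> Y"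
    and agree_above: "\<forall>X'\<in>P. \<forall>Y'\<in>Q. \<forall>x\<in>X' \<inter> Y'. m < x \<longrightarrow> X' = Y'"
  shows "X \<subseteq> {..m}"
proof
  fix y assume "y \<in> X"
  show "y \<in> {..m}"
  proof (rule ccontr)
    assume "y \<notin> {..m}"
    then have "m < y" by simp
    have "y \<in> A" using partition_onD1[OF P] \<open>X \<in> P\<close> \<open>y \<in> X\<close> by blast
    then obtain Y' where "Y' \<in> Q" "y \<in> Y'" using partition_onD1[OF Q] by blast
    with agree_above have "X = Y'" using \<open>X \<in> P\<close> \<open>y \<in> X\<close> \<open>m < y\<close> by blast
    with partition_on_blocks_eq[OF Q \<open>Y' \<in> Q\<close> \<open>Y \<in> Q\<close>] have "X = Y"
      using \<open>m \<in> X\<close> \<open>m \<in> Y\<close> by blast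
    with \<open>X \<noteq> Y\<close> show False ..
  qed
qed

lemma partitions_disagree_at_maximum:
  fixes A :: "'a::linorder set"
  assumes "finite A" and P: "partition_on A P" and Q: "partition_on A Q" and "P \<noteq> Q"
  obtains X Y m
  where "X \<in> P" "Y \<in> Q" "X \<noteq> Y" "m \<in> X" "m \<in> Y" "X \<union> Y \<subseteq> A \<inter> {..m}"
proof -
  define D where "D = {x. \<exists>X\<in>P. \<exists>Y\<in>Q. x \<in> X \<and> x \<in> Y \<and> X \<noteq> Y}"
  have "D \<noteq> {}"
    using partition_on_eq_if_blocks_agree[OF P Q] \<open>P \<noteq> Q\<close> unfolding D_def by blast
  moreover have "finite D"
    using \<open>finite A\<close> partition_onD1[OF P] unfolding D_def by (auto intro: finite_subset)
  ultimately have "Max D \<in> D" and max: "\<forall>x\<in>D. x \<le> Max D" by auto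
  then obtain X Y where XY: "X \<in> P" "Y \<in> Q" "Max D \<in> X" "Max D \<in> Y" "X \<noteq> Y"
    unfolding D_def by blast
  have agree_above: "\<forall>X'\<in>P. \<forall>Y'\<in>Q. \<forall>x\<in>X' \<inter> Y'. Max D < x \<longrightarrow> X' = Y'"
    using max unfolding D_def by fastforce
  have "X \<subseteq> {..Max D}"
    using partition_on_block_le_if_agree_above[OF P Q XY agree_above] .
  moreover have "Y \<subseteq> {..Max D}"
    using partition_on_block_le_if_agree_above[OF Q P XY(2,1,4,3) XY(5)[symmetric]] agree_above
    by blast
  moreover have "X \<union> Y \<subseteq> A" using partition_onD1[OF P] partition_onD1[OF Q] XY(1,2) by blast
  ultimately show ?thesis using that XY by blast
qed

lemma power_unique_in_interval:
  fixes b m p q :: nat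
  assumes "1 < b" "m \<le> b ^ p" "b ^ p < b * m" "m \<le> b ^ q" "b ^ q < b * m"
  shows "p = q"
proof -
  have False if "m \<le> b ^ i" "b ^ j < b * m" "i < j" for i j
  proof -
    have "b * m \<le> b ^ Suc i" using that(1) by simp
    also have "\<dots> \<le> b ^ j" using \<open>1 < b\<close> \<open>i < j\<close> by (intro power_increasing) auto
    finally show False using that(2) by simp
  qed
  with assms show ?thesis by (metis linorder_neqE_nat)
qed

lemma eq_sum_minus_zero_if_card_le_1:
  fixes S :: "nat set"
  assumes "finite S" "card S \<le> 1" "0 \<notin> S"
  shows "S = {\<Sum>S} - {0}"
proof (cases "card S")
  case 0
  then show ?thesis using assms(1) by simp
next
  case (Suc k)
  then have "card S = 1" using assms(2) by simp
  then obtain a where "S = {a}" by (rule card_1_singletonE)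
  then show ?thesis using assms(3) by simp
qed

lemma block_with_max_card_le_2:
  fixes m :: nat
  assumes "B \<subseteq> {1..m}" "m \<in> B" "card B \<le> 2"
  shows "B = insert m ({\<Sum>B - m} - {0})" and "m \<le> \<Sum>B" and "\<Sum>B < 2 * m"
proof -
  have "finite B" using finite_subset[OF assms(1)] by simp
  define S where "S = B - {m}"
  have "S \<subseteq> {1..<m}" using assms(1) unfolding S_def by auto
  have sum_B: "\<Sum>B = m + \<Sum>S"
    unfolding S_def using sum.remove[OF \<open>finite B\<close> \<open>m \<in> B\<close>] by simp
  have "finite S" "card S \<le> 1" "0 \<notin> S"
    using \<open>finite B\<close> \<open>m \<in> B\<close> assms(3) \<open>S \<subseteq> {1..<m}\<close> unfolding S_def by auto
  then have S: "S = {\<Sum>S} - {0}" by (rule eq_sum_minus_zero_if_card_le_1)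
  have "\<Sum>S < m"
  proof (cases "\<Sum>S = 0")
    case True
    then show ?thesis using assms(1,2) by auto
  next
    case False
    then have "\<Sum>S \<in> {\<Sum>S} - {0}" by simp
    also have "\<dots> = S" using S by (rule sym)
    finally have "\<Sum>S \<in> S" .
    then show ?thesis using \<open>S \<subseteq> {1..<m}\<close> by auto
  qed
  have "\<Sum>B - m = \<Sum>S" using sum_B by simp
  have "B = insert m S" using \<open>m \<in> B\<close> unfolding S_def by blast
  also have "S = {\<Sum>B - m} - {0}" by (subst \<open>\<Sum>B - m = \<Sum>S\<close>) (rule S)
  finally show "B = insert m ({\<Sum>B - m} - {0})" .
  show "m \<le> \<Sum>B" and "\<Sum>B < 2 * m" using sum_B \<open>\<Sum>S < m\<close> by simp_all
qed

lemma power_of_3_blocks_with_max_eq: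
  fixes m :: nat
  assumes B: "B \<subseteq> {1..m}" "m \<in> B" "card B \<le> 2" "\<Sum>B = 3 ^ p"
    and C: "C \<subseteq> {1..m}" "m \<in> C" "card C \<le> 2" "\<Sum>C = 3 ^ q"
  shows "B = C"
proof -
  note block_B = block_with_max_card_le_2[OF B(1-3)]
  note block_C = block_with_max_card_le_2[OF C(1-3)]
  have "p = q"
    using block_B(2,3) block_C(2,3) B(4) C(4) by (intro power_unique_in_interval[of 3 m]) auto
  then show ?thesis using block_B(1) block_C(1) B(4) C(4) by simp
qed

theorem mainTheorem6:
  fixes n :: nat and P Q :: "nat set set"
  assumes "n \<ge> 1"
    and "three_good n P" and "three_good n Q"
    and "{B\<in>P. card B = 3} = {B\<in>Q. card B = 3}"
  shows "P = Q"
proof (rule ccontr)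
  assume "P \<noteq> Q"
  have P: "partition_on {1..n} P" and good_P: "\<forall>B\<in>P. card B \<le> 3 \<and> (\<exists>s. \<Sum>B = 3 ^ s)"
    and Q: "partition_on {1..n} Q" and good_Q: "\<forall>C\<in>Q. card C \<le> 3 \<and> (\<exists>s. \<Sum>C = 3 ^ s)"
    using assms(2,3) unfolding three_good_def by auto
  obtain B C m where "B \<in> P" "C \<in> Q" "B \<noteq> C" "m \<in> B" "m \<in> C"
    and "B \<union> C \<subseteq> {1..n} \<inter> {..m}"
    using partitions_disagree_at_maximum[OF _ P Q \<open>P \<noteq> Q\<close>] by blast
  have "card B \<noteq> 3"
    using assms(4) \<open>B \<in> P\<close> \<open>B \<noteq> C\<close> partition_on_blocks_eq[OF Q _ \<open>C \<in> Q\<close> \<open>m \<in> B\<close> \<open>m \<in> C\<close>]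
    by blast
  have "card C \<noteq> 3"
    using assms(4) \<open>C \<in> Q\<close> \<open>B \<noteq> C\<close> partition_on_blocks_eq[OF P \<open>B \<in> P\<close> _ \<open>m \<in> B\<close> \<open>m \<in> C\<close>]
    by blast
  obtain p q where "card B \<le> 3" "\<Sum>B = 3 ^ p" "card C \<le> 3" "\<Sum>C = 3 ^ q"
    using good_P good_Q \<open>B \<in> P\<close> \<open>C \<in> Q\<close> by blast
  moreover have "B \<subseteq> {1..m}" "C \<subseteq> {1..m}"
    using \<open>B \<union> C \<subseteq> {1..n} \<inter> {..m}\<close> by (auto simp: subset_iff)
  ultimately have "B = C"
    using power_of_3_blocks_with_max_eq \<open>m \<in> B\<close> \<open>m \<in> C\<close> \<open>card B \<noteq> 3\<close> \<open>card C \<noteq> 3\<close>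
    by simp
  with \<open>B \<noteq> C\<close> show False ..
qed

end
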